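(* (i) If $\overline{\mathbb{Q}}$ is a valuation measure with respect to the basket, then the probability measures $\mathbb{Q}_i$ defined by $\frac{\mathrm d\mathbb{Q}_i}{\mathrm d\overline{\mathbb{Q}}}=\frac{\overline S_i(T)}{\overline S_i(0)}$, $i=1,\dots,d$, form a numéraire-consistent family and $\overline{\mathbb{Q}}=\sum_i\overline S_i(0)\mathbb{Q}_i$. (ii) Conversely, if $(\mathbb{Q}_i)_i$ is a numéraire-consistent family, then $\overline{\mathbb{Q}}:=\sum_i\overline S_i(0)\mathbb{Q}_i$ is a probability measure under which $\overline S$ is a martingale, and $\frac{\mathrm d\mathbb{Q}_i}{\mathrm d\overline{\mathbb{Q}}}=\frac{\overline S_i(T)}{\overline S_i(0)}$ for every $i$; equivalently $\mathbb{E}^{\overline{\mathbb{Q}}}[\overline S_i(t)\mathbf 1_A]=\overline S_i(0)\mathbb{Q}_i(A)$ for all $i$, $t\in[0,T]$, $A\in\mathcal F(t)$.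
   Context: Fix $T>0$, $d\in\mathbb N$, and a filtered space $(\Omega,\mathcal{F}(T),(\mathcal{F}(t))_{t\in[0,T]})$ with right-continuous filtration and trivial $\mathcal{F}(0)$. For $x,y\in[0,\infty]$ the product $xy$ is defined except when one is $0$ and the other is $\infty$. An exchange matrix is $s=(s_{i,j})\in[0,\infty]^{d\times d}$ with $s_{i,i}=1$ and $s_{i,j}s_{j,k}=s_{i,k}$ for all $i,j,k$ whenever the product is defined. $S=(S_{i,j})_{i,j=1}^d$ is a right-continuous adapted $[0,\infty]^{d\times d}$-valued process such that $S(t)$ is an exchange matrix for every $t$, with $\sum_jS_{i,j}(0)<\infty$ for all $i$. Basket prices: $\overline S_i=1/\sum_jS_{i,j}\in[0,1]$. A valuation measure with respect to the basket is a probability measure $\overline{\mathbb{Q}}$ on $(\Omega,\mathcal{F}(T))$ under which $\overline S=(\overline S_i)_i$ is a local martingale (equivalently a martingale). A family $(\mathbb{Q}_i)_{i=1}^d$ of probability measures on $(\Omega,\mathcal{F}(T))$ is numéraire-consistent if $\mathbb{E}^{\mathbb{Q}_i}[S_{i,j}(t)\mathbf{1}_A]=S_{i,j}(0)\,\mathbb{Q}_j(A\cap\{S_{j,i}(t)>0\})$ for all $i,j$, $t\in[0,T]$, $A\in\mathcal{F}(t)$. *)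

theory Defs
  imports "HOL-Probability.Probability"
begin

definition filtered_space :: "(real \<Rightarrow> 'a measure) \<Rightarrow> real \<Rightarrow> bool" where
  "filtered_space F T \<longleftrightarrow> T > 0
     \<and> (\<forall>t\<in>{0..T}. space (F t) = space (F T))
     \<and> (\<forall>s t. 0 \<le> s \<longrightarrow> s \<le> t \<longrightarrow> t \<le> T \<longrightarrow> sets (F s) \<subseteq> sets (F t))
     \<and> (\<forall>t\<in>{0..<T}. sets (F t) = (\<Inter>u\<in>{t<..T}. sets (F u)))
     \<and> sets (F 0) = {{}, space (F 0)}"

text \<open>Exchange matrix with entries in [0,\<infinity>] (ennreal); the product relation is only required
  when it is defined, i.e. not of the form 0 * \<infinity> or \<infinity> * 0.\<close>
definition exchange_matrix :: "('i \<Rightarrow> 'i \<Rightarrow> ennreal) \<Rightarrow> bool" where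
  "exchange_matrix s \<longleftrightarrow> (\<forall>i. s i i = 1)
     \<and> (\<forall>i j k. \<not> (s i j = 0 \<and> s j k = \<infinity>) \<and> \<not> (s i j = \<infinity> \<and> s j k = 0)
                 \<longrightarrow> s i j * s j k = s i k)"

text \<open>Initial (deterministic, since F(0) is trivial) value S(0).\<close>
definition init_val :: "(real \<Rightarrow> 'a measure) \<Rightarrow> (real \<Rightarrow> 'a \<Rightarrow> 'i \<Rightarrow> 'i \<Rightarrow> ennreal) \<Rightarrow> 'i \<Rightarrow> 'i \<Rightarrow> ennreal" where
  "init_val F S i j = S 0 (SOME \<omega>. \<omega> \<in> space (F 0)) i j"

definition exchange_process ::
  "(real \<Rightarrow> 'a measure) \<Rightarrow> real \<Rightarrow> (real \<Rightarrow> 'a \<Rightarrow> 'i::finite \<Rightarrow> 'i \<Rightarrow> ennreal) \<Rightarrow> bool" where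
  "exchange_process F T S \<longleftrightarrow>
     (\<forall>t\<in>{0..T}. \<forall>\<omega>\<in>space (F T). exchange_matrix (S t \<omega>))
     \<and> (\<forall>t\<in>{0..T}. \<forall>i j. (\<lambda>\<omega>. S t \<omega> i j) \<in> borel_measurable (F t))
     \<and> (\<forall>t\<in>{0..<T}. \<forall>\<omega>\<in>space (F T). \<forall>i j.
          ((\<lambda>u. S u \<omega> i j) \<longlongrightarrow> S t \<omega> i j) (at_right t))
     \<and> (\<forall>\<omega>\<in>space (F T). \<forall>i. (\<Sum>j\<in>UNIV. S 0 \<omega> i j) < \<infinity>)"

text \<open>Basket price  Sbar_i = 1 / sum_j S_ij, a value in [0,1] (1/\<infinity> = 0).\<close>
definition basket :: "(real \<Rightarrow> 'a \<Rightarrow> 'i::finite \<Rightarrow> 'i \<Rightarrow> ennreal) \<Rightarrow> real \<Rightarrow> 'a \<Rightarrow> 'i \<Rightarrow> real" where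
  "basket S t \<omega> i = enn2real (inverse (\<Sum>j\<in>UNIV. S t \<omega> i j))"

definition basket0 :: "(real \<Rightarrow> 'a measure) \<Rightarrow> (real \<Rightarrow> 'a \<Rightarrow> 'i::finite \<Rightarrow> 'i \<Rightarrow> ennreal) \<Rightarrow> 'i \<Rightarrow> real" where
  "basket0 F S i = enn2real (inverse (\<Sum>j\<in>UNIV. init_val F S i j))"

definition martingale :: "'a measure \<Rightarrow> (real \<Rightarrow> 'a measure) \<Rightarrow> real \<Rightarrow> (real \<Rightarrow> 'a \<Rightarrow> real) \<Rightarrow> bool" where
  "martingale M F T X \<longleftrightarrow>
     (\<forall>t\<in>{0..T}. X t \<in> borel_measurable (F t) \<and> integrable M (X t))
     \<and> (\<forall>s t A. 0 \<le> s \<longrightarrow> s \<le> t \<longrightarrow> t \<le> T \<longrightarrow> A \<in> sets (F s) \<longrightarrow>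
          (\<integral>\<omega>. indicator A \<omega> * X t \<omega> \<partial>M) = (\<integral>\<omega>. indicator A \<omega> * X s \<omega> \<partial>M))"

definition prob_on :: "(real \<Rightarrow> 'a measure) \<Rightarrow> real \<Rightarrow> 'a measure \<Rightarrow> bool" where
  "prob_on F T Q \<longleftrightarrow> prob_space Q \<and> sets Q = sets (F T)"

definition valuation_measure ::
  "(real \<Rightarrow> 'a measure) \<Rightarrow> real \<Rightarrow> (real \<Rightarrow> 'a \<Rightarrow> 'i::finite \<Rightarrow> 'i \<Rightarrow> ennreal) \<Rightarrow> 'a measure \<Rightarrow> bool" where
  "valuation_measure F T S Qb \<longleftrightarrow> prob_on F T Qb \<and> (\<forall>i. martingale Qb F T (\<lambda>t \<omega>. basket S t \<omega> i))"

definition numeraire_consistent ::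
  "(real \<Rightarrow> 'a measure) \<Rightarrow> real \<Rightarrow> (real \<Rightarrow> 'a \<Rightarrow> 'i::finite \<Rightarrow> 'i \<Rightarrow> ennreal) \<Rightarrow> ('i \<Rightarrow> 'a measure) \<Rightarrow> bool" where
  "numeraire_consistent F T S Q \<longleftrightarrow> (\<forall>i. prob_on F T (Q i))
     \<and> (\<forall>i j. \<forall>t\<in>{0..T}. \<forall>A\<in>sets (F t).
          (\<integral>\<^sup>+ \<omega>. S t \<omega> i j * indicator A \<omega> \<partial>Q i)
          = init_val F S i j * emeasure (Q j) (A \<inter> {\<omega>\<in>space (F T). S t \<omega> j i > 0}))"

end

theory Submission
  imports Defs
begin

text \<open>For an exchange matrix s with basket prices b_i = 1 / (sum_k s_ik) one has
  s_ij b_i = b_j [s_ji > 0] and sum_i b_i = 1; the latter because some asset i0 has a finite price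
  in terms of every other asset, and then b_i = s_(i0,i) b_(i0).

  (i) If the basket prices are martingales under Qb, the density b_i(T)/b_i(0) of Q_i may be
  replaced by b_i(t)/b_i(0) when integrating F(t)-measurable functions. The first identity then
  turns E^Q_i[S_ij(t) 1_A] into E^Qb[b_j(t) 1_B] / b_i(0) with B = A \<inter> {S_ji(t) > 0}, which is
  S_ij(0) Q_j(B) since b_j(0) = S_ij(0) b_i(0); the second identity gives Qb = sum_i b_i(0) Q_i.

  (ii) Conversely, numeraire consistency says that on F(t) the measures S_ij(t) dQ_i and
  S_ij(0) [S_ji(t) > 0] dQ_j coincide, and it forces S_ij(t) < \<infinity> Q_i-almost surely. With the
  first identity this gives b_j(0) E^Q_j[b_i(t) 1_A] = b_i(0) E^Q_i[b_j(t) 1_A]; summing over j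
  and using sum_j b_j(t) = 1 yields E^Qb[b_i(t) 1_A] = b_i(0) Q_i(A) for Qb = sum_i b_i(0) Q_i,
  for every t.\<close>

section \<open>Exchange matrices\<close>

lemma exchange_matrix_diag: "exchange_matrix s \<Longrightarrow> s i i = 1"
  unfolding exchange_matrix_def by blast

lemma exchange_matrix_mult:
  "exchange_matrix s \<Longrightarrow> s i j \<noteq> 0 \<Longrightarrow> s i j \<noteq> \<top> \<Longrightarrow> s i j * s j k = s i k"
  unfolding exchange_matrix_def by (metis infinity_ennreal_def)

lemma exchange_matrix_eq_0_iff:
  assumes "exchange_matrix s"
  shows "s i j = 0 \<longleftrightarrow> s j i = \<top>"
proof
  assume "s i j = 0"
  then show "s j i = \<top>"
    using assms unfolding exchange_matrix_def by (metis infinity_ennreal_def mult_zero_right zero_neq_one)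
next
  assume "s j i = \<top>"
  then show "s i j = 0"
    using assms unfolding exchange_matrix_def
    by (metis ennreal_mult_top ennreal_top_neq_one infinity_ennreal_def)
qed

lemma exchange_matrix_trans_less_top:
  assumes "exchange_matrix s" "s i j < \<top>" "s j k < \<top>"
  shows "s i k < \<top>"
proof -
  have "s i k = s i j * s j k"
    using assms unfolding exchange_matrix_def by (metis infinity_ennreal_def less_irrefl)
  then show ?thesis
    using assms(2,3) by (simp add: ennreal_mult_less_top)
qed

lemma one_le_row_sum:
  fixes s :: "'i::finite \<Rightarrow> 'i \<Rightarrow> ennreal"
  assumes "exchange_matrix s"
  shows "1 \<le> (\<Sum>k\<in>UNIV. s i k)"
  using member_le_sum[of i UNIV "s i"] exchange_matrix_diag[OF assms] by simp

lemma exchange_matrix_mult_inverse_row_sum: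
  fixes s :: "'i::finite \<Rightarrow> 'i \<Rightarrow> ennreal"
  assumes s: "exchange_matrix s"
  shows "s i j * inverse (\<Sum>k\<in>UNIV. s i k)
    = inverse (\<Sum>k\<in>UNIV. s j k) * (if 0 < s j i then 1 else 0)"
proof -
  consider "s i j = 0" | "s i j = \<top>" | "0 < s i j" "s i j < \<top>"
    using less_top zero_less_iff_neq_zero by blast
  then show ?thesis
  proof cases
    case 1
    then have "(\<Sum>k\<in>UNIV. s j k) = \<top>"
      using member_le_sum[of i UNIV "s j"] exchange_matrix_eq_0_iff[OF s] by (simp add: top_unique)
    then show ?thesis using 1 by simp
  next
    case 2
    then have "(\<Sum>k\<in>UNIV. s i k) = \<top>"
      using member_le_sum[of j UNIV "s i"] by (simp add: top_unique)
    then show ?thesis using 2 exchange_matrix_eq_0_iff[OF s, of j i] by simp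
  next
    case 3
    then have mult: "s i j * s j k = s i k" for k
      using exchange_matrix_mult[OF s] by simp
    then have "0 < s j i"
      using exchange_matrix_diag[OF s, of i] by (metis mult_zero_right not_gr_zero zero_neq_one)
    moreover have "s i j * inverse (s i j) = 1"
      using 3 ennreal_divide_self[of "s i j"] by (simp add: divide_ennreal_def)
    moreover have "(\<Sum>k\<in>UNIV. s i k) = s i j * (\<Sum>k\<in>UNIV. s j k)"
      by (simp add: sum_distrib_left mult)
    ultimately show ?thesis
      using 3 by (simp add: ennreal_inverse_mult' mult.assoc[symmetric])
  qed
qed

lemma exchange_matrix_finite_row:
  fixes s :: "'i::finite \<Rightarrow> 'i \<Rightarrow> ennreal"
  assumes s: "exchange_matrix s"
  obtains i0 where "\<And>j. s i0 j < \<top>"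
proof -
  have "\<exists>i0\<in>A. \<forall>j\<in>A. s i0 j < \<top>" if "finite A" "A \<noteq> {}" for A :: "'i set"
    using that
  proof (induction A rule: finite_ne_induct)
    case (singleton x)
    then show ?case using exchange_matrix_diag[OF s, of x] by auto
  next
    case (insert x A)
    then obtain i0 where i0: "i0 \<in> A" "\<forall>j\<in>A. s i0 j < \<top>" by auto
    show ?case
    proof (cases "s x i0 < \<top>")
      case True
      then show ?thesis
        using i0 exchange_matrix_trans_less_top[OF s, of x i0] exchange_matrix_diag[OF s, of x] by auto
    next
      case False
      then have "s i0 x < \<top>"
        using exchange_matrix_eq_0_iff[OF s, of i0 x] less_top by fastforce
      then show ?thesis using i0 by auto
    qed
  qed
  from this[of UNIV] that show ?thesis by auto
qed

lemma sum_inverse_row_sum: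
  fixes s :: "'i::finite \<Rightarrow> 'i \<Rightarrow> ennreal"
  assumes s: "exchange_matrix s"
  shows "(\<Sum>i\<in>UNIV. inverse (\<Sum>k\<in>UNIV. s i k)) = 1"
proof -
  obtain i0 where i0: "\<And>j. s i0 j < \<top>" using exchange_matrix_finite_row[OF s] by blast
  have row: "inverse (\<Sum>k\<in>UNIV. s i k) = s i0 i * inverse (\<Sum>k\<in>UNIV. s i0 k)" for i
    using exchange_matrix_mult_inverse_row_sum[OF s, of i0 i] exchange_matrix_eq_0_iff[OF s, of i i0] i0[of i]
    by (simp add: zero_less_iff_neq_zero)
  have "(\<Sum>k\<in>UNIV. s i0 k) \<noteq> 0"
    using one_le_row_sum[OF s, of i0] by (metis not_one_le_zero)
  moreover have "(\<Sum>k\<in>UNIV. s i0 k) < \<top>"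
    using i0 by simp
  ultimately have "(\<Sum>k\<in>UNIV. s i0 k) / (\<Sum>k\<in>UNIV. s i0 k) = 1"
    by (rule ennreal_divide_self)
  then show ?thesis
    unfolding sum.cong[OF refl row] sum_distrib_right[symmetric] by (simp add: divide_ennreal_def)
qed

lemma ennreal_enn2real_inverse: "(x::ennreal) \<noteq> 0 \<Longrightarrow> ennreal (enn2real (inverse x)) = inverse x"
  by (subst ennreal_enn2real) (auto simp: less_top[symmetric])

lemma ennreal_inverse_eq_mult_inverse:
  fixes a b :: real and c :: ennreal
  assumes "0 < a" "0 < b" "c * ennreal a = ennreal b"
  shows "ennreal (1 / a) = c * ennreal (1 / b)"
proof -
  have "c * ennreal (1 / b) = c * (ennreal a * ennreal (1 / a)) * ennreal (1 / b)"
    using assms(1) by (simp add: ennreal_mult[symmetric])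
  also have "\<dots> = ennreal b * ennreal (1 / a) * ennreal (1 / b)"
    by (simp only: assms(3) mult.assoc[symmetric])
  also have "\<dots> = ennreal (b * (1 / a) * (1 / b))"
    using assms by (simp add: ennreal_mult[symmetric])
  also have "\<dots> = ennreal (1 / a)"
    using assms(2) by simp
  finally show ?thesis ..
qed

lemma basket_nonneg: "0 \<le> basket S t \<omega> i"
  unfolding basket_def by simp

lemma ennreal_basket_exchange_matrix:
  assumes "exchange_matrix (S t \<omega>)"
  shows "ennreal (basket S t \<omega> i) = inverse (\<Sum>j\<in>UNIV. S t \<omega> i j)"
  unfolding basket_def using one_le_row_sum[OF assms, of i]
  by (intro ennreal_enn2real_inverse) (metis not_one_le_zero)

section \<open>Measure theory\<close>

lemma borel_measurable_trivial_sigma_const: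
  fixes f :: "'a \<Rightarrow> 'b::t1_space"
  assumes "sets M = {{}, space M}" "f \<in> borel_measurable M" "x \<in> space M" "y \<in> space M"
  shows "f x = f y"
proof -
  have "f -` {f x} \<inter> space M \<in> sets M"
    using assms(2) by (rule measurable_sets) simp
  moreover have "x \<in> f -` {f x} \<inter> space M"
    using assms(3) by simp
  ultimately have "f -` {f x} \<inter> space M = space M"
    using assms(1) by auto
  then show ?thesis
    using assms(4) by (metis IntD1 vimage_singleton_eq)
qed

lemma nn_integral_eq_if_emeasure_eq_on_subalgebra:
  assumes sets_eq: "sets M1 = sets M2" and sub: "subalgebra M1 N"
    and eq: "\<And>A. A \<in> sets N \<Longrightarrow> emeasure M1 A = emeasure M2 A"
    and f: "f \<in> borel_measurable N"
  shows "(\<integral>\<^sup>+x. f x \<partial>M1) = (\<integral>\<^sup>+x. f x \<partial>M2)"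
proof -
  have sub2: "subalgebra M2 N"
    using sub sets_eq unfolding subalgebra_def by (metis sets_eq_imp_space_eq)
  have "restr_to_subalg M1 N = restr_to_subalg M2 N"
    by (rule measure_eqI) (simp_all add: sets_restr_to_subalg[OF sub] sets_restr_to_subalg[OF sub2]
        emeasure_restr_to_subalg[OF sub] emeasure_restr_to_subalg[OF sub2] eq)
  then show ?thesis
    using nn_integral_subalgebra2[OF sub f] nn_integral_subalgebra2[OF sub2 f] by simp
qed

lemma nn_integral_mult_indicator_eq_integral:
  fixes f :: "'a \<Rightarrow> real"
  assumes "integrable M f" "\<And>x. x \<in> space M \<Longrightarrow> 0 \<le> f x" "A \<in> sets M"
  shows "(\<integral>\<^sup>+x. ennreal (f x) * indicator A x \<partial>M) = ennreal (\<integral>x. f x * indicator A x \<partial>M)"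
proof -
  have "(\<integral>\<^sup>+x. ennreal (f x) * indicator A x \<partial>M) = (\<integral>\<^sup>+x. ennreal (f x * indicator A x) \<partial>M)"
    by (intro nn_integral_cong) (simp split: split_indicator)
  also have "\<dots> = ennreal (\<integral>x. f x * indicator A x \<partial>M)"
    using assms by (intro nn_integral_eq_integral integrable_real_mult_indicator AE_I2)
      (auto split: split_indicator)
  finally show ?thesis .
qed

lemma nn_integral_mult_eq_on_subalgebra:
  fixes X Y :: "'a \<Rightarrow> real"
  assumes sub: "subalgebra M N"
    and X: "integrable M X" "\<And>x. x \<in> space M \<Longrightarrow> 0 \<le> X x"
    and Y: "integrable M Y" "\<And>x. x \<in> space M \<Longrightarrow> 0 \<le> Y x"
    and eq: "\<And>A. A \<in> sets N \<Longrightarrow> (\<integral>x. X x * indicator A x \<partial>M) = (\<integral>x. Y x * indicator A x \<partial>M)"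
    and g: "g \<in> borel_measurable N"
  shows "(\<integral>\<^sup>+x. ennreal (X x) * g x \<partial>M) = (\<integral>\<^sup>+x. ennreal (Y x) * g x \<partial>M)"
proof -
  have sets_N: "A \<in> sets N \<Longrightarrow> A \<in> sets M" for A
    using sub unfolding subalgebra_def by blast
  have "(\<integral>\<^sup>+x. g x \<partial>density M (\<lambda>x. ennreal (X x))) = (\<integral>\<^sup>+x. g x \<partial>density M (\<lambda>x. ennreal (Y x)))"
  proof (rule nn_integral_eq_if_emeasure_eq_on_subalgebra[OF _ _ _ g])
    show "subalgebra (density M (\<lambda>x. ennreal (X x))) N"
      using sub unfolding subalgebra_def by simp
    fix A assume "A \<in> sets N"
    then show "emeasure (density M (\<lambda>x. ennreal (X x))) A = emeasure (density M (\<lambda>x. ennreal (Y x))) A"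
      using eq sets_N X Y
      by (simp add: emeasure_density nn_integral_mult_indicator_eq_integral borel_measurable_integrable)
  qed simp
  then show ?thesis
    using measurable_from_subalg[OF sub g] X(1) Y(1)
    by (simp add: nn_integral_density borel_measurable_integrable)
qed

definition weighted_sum_measure ::
  "'a measure \<Rightarrow> 'i set \<Rightarrow> ('i \<Rightarrow> ennreal) \<Rightarrow> ('i \<Rightarrow> 'a measure) \<Rightarrow> 'a measure" where
  "weighted_sum_measure M I c Q = measure_of (space M) (sets M) (\<lambda>A. \<Sum>i\<in>I. c i * emeasure (Q i) A)"

lemma sets_weighted_sum_measure [simp, measurable_cong]:
  "sets (weighted_sum_measure M I c Q) = sets M"
  unfolding weighted_sum_measure_def by simp

lemma space_weighted_sum_measure [simp]: "space (weighted_sum_measure M I c Q) = space M"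
  unfolding weighted_sum_measure_def by (simp add: space_measure_of_conv)

lemma emeasure_weighted_sum_measure:
  assumes "finite I" "\<And>i. i \<in> I \<Longrightarrow> sets (Q i) = sets M" "A \<in> sets M"
  shows "emeasure (weighted_sum_measure M I c Q) A = (\<Sum>i\<in>I. c i * emeasure (Q i) A)"
  unfolding weighted_sum_measure_def
proof (rule emeasure_measure_of_sigma[OF sets.sigma_algebra_axioms _ _ assms(3)])
  show "positive (sets M) (\<lambda>A. \<Sum>i\<in>I. c i * emeasure (Q i) A)"
    unfolding positive_def by simp
  show "countably_additive (sets M) (\<lambda>A. \<Sum>i\<in>I. c i * emeasure (Q i) A)"
    unfolding countably_additive_def
  proof (intro allI impI)
    fix F :: "nat \<Rightarrow> _ set"
    assume F: "range F \<subseteq> sets M" "disjoint_family F" "\<Union> (range F) \<in> sets M"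
    have "(\<Sum>n. \<Sum>i\<in>I. c i * emeasure (Q i) (F n)) = (\<Sum>i\<in>I. c i * (\<Sum>n. emeasure (Q i) (F n)))"
      by (subst suminf_sum) simp_all
    also have "\<dots> = (\<Sum>i\<in>I. c i * emeasure (Q i) (\<Union> (range F)))"
      using F assms(2) by (intro sum.cong refl) (simp add: suminf_emeasure)
    finally show "(\<Sum>n. \<Sum>i\<in>I. c i * emeasure (Q i) (F n)) = (\<Sum>i\<in>I. c i * emeasure (Q i) (\<Union> (range F)))" .
  qed
qed

lemma nn_integral_weighted_sum_measure:
  assumes I: "finite I" and sets_Q: "\<And>i. i \<in> I \<Longrightarrow> sets (Q i) = sets M"
    and f: "f \<in> borel_measurable M"
  shows "(\<integral>\<^sup>+x. f x \<partial>weighted_sum_measure M I c Q) = (\<Sum>i\<in>I. c i * (\<integral>\<^sup>+x. f x \<partial>Q i))"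
proof -
  let ?W = "weighted_sum_measure M I c Q"
  have meas_Q: "g \<in> borel_measurable (Q i)" if "g \<in> borel_measurable M" "i \<in> I"
    for g :: "_ \<Rightarrow> ennreal" and i
    using that by (simp add: measurable_cong_sets[OF sets_Q refl])
  have space_Q: "space (Q i) = space M" if "i \<in> I" for i
    using sets_Q[OF that] by (rule sets_eq_imp_space_eq)
  from f have "f \<in> borel_measurable ?W" by simp
  then show ?thesis
  proof (induction rule: borel_measurable_induct)
    case (cong f g)
    have "(\<integral>\<^sup>+x. f x \<partial>Q i) = (\<integral>\<^sup>+x. g x \<partial>Q i)" if "i \<in> I" for i
      using cong space_Q[OF that] by (intro nn_integral_cong) simp
    moreover have "(\<integral>\<^sup>+x. f x \<partial>?W) = (\<integral>\<^sup>+x. g x \<partial>?W)"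
      using cong by (intro nn_integral_cong) simp
    ultimately show ?case
      using cong by (simp cong: sum.cong)
  next
    case (set A)
    then show ?case
      using sets_Q by (simp add: emeasure_weighted_sum_measure[OF I])
  next
    case (mult u k)
    then show ?case
      by (simp add: meas_Q nn_integral_cmult sum_distrib_left ac_simps cong: sum.cong)
  next
    case (add u v)
    then show ?case
      by (simp add: meas_Q nn_integral_add sum.distrib distrib_left cong: sum.cong)
  next
    case (seq U)
    have mono: "incseq (\<lambda>n. c i * (\<integral>\<^sup>+x. U n x \<partial>Q i))" for i
      using \<open>incseq U\<close> by (auto simp: incseq_def le_fun_def intro!: mult_left_mono nn_integral_mono)
    have "(\<integral>\<^sup>+x. (SUP n. U n) x \<partial>?W) = (SUP n. (\<integral>\<^sup>+x. U n x \<partial>?W))"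
      unfolding SUP_apply using seq by (intro nn_integral_monotone_convergence_SUP) auto
    also have "\<dots> = (SUP n. \<Sum>i\<in>I. c i * (\<integral>\<^sup>+x. U n x \<partial>Q i))"
      using seq by simp
    also have "\<dots> = (\<Sum>i\<in>I. SUP n. c i * (\<integral>\<^sup>+x. U n x \<partial>Q i))"
      using mono by (rule ennreal_SUP_sum)
    also have "\<dots> = (\<Sum>i\<in>I. c i * (\<integral>\<^sup>+x. (SUP n. U n) x \<partial>Q i))"
      unfolding SUP_apply using seq
      by (intro sum.cong refl) (simp add: meas_Q nn_integral_monotone_convergence_SUP SUP_mult_left_ennreal)
    finally show ?case .
  qed
qed

section \<open>The market\<close>

lemma space_nonempty_if_prob_on: "prob_on F T Q \<Longrightarrow> space (F T) \<noteq> {}"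
  unfolding prob_on_def using prob_space.not_empty sets_eq_imp_space_eq by blast

text \<open>The assumption that the sample space is nonempty, which holds as soon as F(T) carries a
  probability measure, makes init_val F S the actual value of S(0) rather than SOME element of
  an empty set.\<close>

locale basket_market =
  fixes F :: "real \<Rightarrow> 'a measure" and T :: real
    and S :: "real \<Rightarrow> 'a \<Rightarrow> 'i::finite \<Rightarrow> 'i \<Rightarrow> ennreal"
  assumes filtered: "filtered_space F T"
    and exchange: "exchange_process F T S"
    and nonempty: "space (F T) \<noteq> {}"
begin

lemma T_pos: "0 < T"
  using filtered[unfolded filtered_space_def] by (rule conjunct1)

lemma space_F: "t \<in> {0..T} \<Longrightarrow> space (F t) = space (F T)"
  using filtered[unfolded filtered_space_def, THEN conjunct2, THEN conjunct1] by blast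

lemma sets_F_mono: "0 \<le> s \<Longrightarrow> s \<le> t \<Longrightarrow> t \<le> T \<Longrightarrow> sets (F s) \<subseteq> sets (F t)"
  using filtered[unfolded filtered_space_def, THEN conjunct2, THEN conjunct2, THEN conjunct1] by blast

lemma sets_F_0: "sets (F 0) = {{}, space (F 0)}"
  using filtered[unfolded filtered_space_def] by (elim conjE)

lemma subalgebra_F: "t \<in> {0..T} \<Longrightarrow> subalgebra (F T) (F t)"
  unfolding subalgebra_def using space_F[of t] sets_F_mono[of t T] by simp

lemma sets_F_subset: "t \<in> {0..T} \<Longrightarrow> A \<in> sets (F t) \<Longrightarrow> A \<in> sets (F T)"
  using sets_F_mono[of t T] by auto

lemma exchange_matrix_S: "t \<in> {0..T} \<Longrightarrow> \<omega> \<in> space (F T) \<Longrightarrow> exchange_matrix (S t \<omega>)"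
  using exchange[unfolded exchange_process_def, THEN conjunct1] by blast

lemma measurable_S [measurable]: "t \<in> {0..T} \<Longrightarrow> (\<lambda>\<omega>. S t \<omega> i j) \<in> borel_measurable (F t)"
  using exchange[unfolded exchange_process_def, THEN conjunct2, THEN conjunct1] by blast

lemma S_0_eq_init_val:
  assumes "\<omega> \<in> space (F T)"
  shows "S 0 \<omega> = init_val F S"
proof -
  have 0: "0 \<in> {0..T}" using T_pos by simp
  have "(SOME \<omega>. \<omega> \<in> space (F 0)) \<in> space (F 0)"
    using assms space_F[OF 0] by (metis someI_ex)
  moreover have "\<omega> \<in> space (F 0)"
    using assms space_F[OF 0] by simp
  ultimately show ?thesis
    unfolding init_val_def
    by (intro ext borel_measurable_trivial_sigma_const[OF sets_F_0 measurable_S[OF 0]])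
qed

lemma exchange_matrix_init_val: "exchange_matrix (init_val F S)"
proof -
  obtain \<omega> where "\<omega> \<in> space (F T)" using nonempty by blast
  then show ?thesis
    using exchange_matrix_S[of 0 \<omega>] S_0_eq_init_val T_pos by simp
qed

lemma init_val_less_top: "init_val F S i j < \<top>"
proof -
  obtain \<omega> where \<omega>: "\<omega> \<in> space (F T)" using nonempty by blast
  then have "(\<Sum>j\<in>UNIV. S 0 \<omega> i j) < \<top>"
    using exchange[unfolded exchange_process_def, THEN conjunct2, THEN conjunct2, THEN conjunct2]
    by simp
  then show ?thesis
    using S_0_eq_init_val[OF \<omega>] by simp
qed

lemma ennreal_basket:
  "t \<in> {0..T} \<Longrightarrow> \<omega> \<in> space (F T) \<Longrightarrow> ennreal (basket S t \<omega> i) = inverse (\<Sum>j\<in>UNIV. S t \<omega> i j)"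
  by (rule ennreal_basket_exchange_matrix[OF exchange_matrix_S])

lemma sum_basket: "t \<in> {0..T} \<Longrightarrow> \<omega> \<in> space (F T) \<Longrightarrow> (\<Sum>i\<in>UNIV. ennreal (basket S t \<omega> i)) = 1"
  using sum_inverse_row_sum[OF exchange_matrix_S] by (simp add: ennreal_basket)

lemma basket_le_1:
  assumes "t \<in> {0..T}" "\<omega> \<in> space (F T)"
  shows "basket S t \<omega> i \<le> 1"
proof -
  have "ennreal (basket S t \<omega> i) \<le> 1"
    using member_le_sum[of i UNIV "\<lambda>i. ennreal (basket S t \<omega> i)"] sum_basket[OF assms] by simp
  then show ?thesis by simp
qed

lemma S_mult_basket:
  "t \<in> {0..T} \<Longrightarrow> \<omega> \<in> space (F T) \<Longrightarrow>
    S t \<omega> i j * ennreal (basket S t \<omega> i) = ennreal (basket S t \<omega> j) * (if 0 < S t \<omega> j i then 1 else 0)"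
  using exchange_matrix_mult_inverse_row_sum[OF exchange_matrix_S] by (simp add: ennreal_basket)

lemma basket_eq_0_if_S_eq_0:
  "t \<in> {0..T} \<Longrightarrow> \<omega> \<in> space (F T) \<Longrightarrow> S t \<omega> i j = 0 \<Longrightarrow> ennreal (basket S t \<omega> j) = 0"
  using S_mult_basket[of t \<omega> i j] exchange_matrix_eq_0_iff[OF exchange_matrix_S, of t \<omega> i j] by simp

lemma measurable_basket [measurable]: "t \<in> {0..T} \<Longrightarrow> (\<lambda>\<omega>. basket S t \<omega> i) \<in> borel_measurable (F t)"
  unfolding basket_def by measurable

lemma measurable_basket_F_T: "t \<in> {0..T} \<Longrightarrow> (\<lambda>\<omega>. basket S t \<omega> i) \<in> borel_measurable (F T)"
  using measurable_from_subalg[OF subalgebra_F measurable_basket] .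

lemma basket_0: "\<omega> \<in> space (F T) \<Longrightarrow> basket S 0 \<omega> i = basket0 F S i"
  unfolding basket_def basket0_def by (simp add: S_0_eq_init_val)

lemma ennreal_basket0: "ennreal (basket0 F S i) = inverse (\<Sum>j\<in>UNIV. init_val F S i j)"
  unfolding basket0_def using one_le_row_sum[OF exchange_matrix_init_val, of i]
  by (intro ennreal_enn2real_inverse) (metis not_one_le_zero)

lemma basket0_pos: "0 < basket0 F S i"
proof -
  have "(\<Sum>j\<in>UNIV. init_val F S i j) \<noteq> \<top>"
    using init_val_less_top by (simp add: less_top[symmetric])
  then have "0 < ennreal (basket0 F S i)"
    by (simp add: ennreal_basket0 ennreal_inverse_positive)
  then show ?thesis by simp
qed

lemma sum_basket0: "(\<Sum>i\<in>UNIV. ennreal (basket0 F S i)) = 1"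
  using sum_inverse_row_sum[OF exchange_matrix_init_val] by (simp add: ennreal_basket0)

lemma init_val_mult_basket0: "init_val F S i j * ennreal (basket0 F S i) = ennreal (basket0 F S j)"
  using exchange_matrix_mult_inverse_row_sum[OF exchange_matrix_init_val, of i j]
    exchange_matrix_eq_0_iff[OF exchange_matrix_init_val, of j i] init_val_less_top[of i j]
  by (simp add: ennreal_basket0 zero_less_iff_neq_zero)

lemma inverse_basket0_eq_init_val_mult:
  "ennreal (1 / basket0 F S i) = init_val F S i j * ennreal (1 / basket0 F S j)"
  by (rule ennreal_inverse_eq_mult_inverse[OF basket0_pos basket0_pos init_val_mult_basket0])

lemma ennreal_basket_divide_basket0:
  "ennreal (basket S t \<omega> i / basket0 F S i) = ennreal (1 / basket0 F S i) * ennreal (basket S t \<omega> i)"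
proof -
  have "ennreal (1 / basket0 F S i) * ennreal (basket S t \<omega> i) = ennreal (1 / basket0 F S i * basket S t \<omega> i)"
    using basket0_pos[of i] basket_nonneg[of S t \<omega> i] by (simp add: ennreal_mult[symmetric])
  then show ?thesis by simp
qed

lemma basket0_mult_inverse: "ennreal (basket0 F S i) * ennreal (1 / basket0 F S i) = 1"
  using basket0_pos[of i] by (simp add: ennreal_mult[symmetric])

end

section \<open>From a valuation measure to a numeraire-consistent family\<close>

locale basket_valuation = basket_market +
  fixes Qb :: "'a measure"
  assumes valuation: "valuation_measure F T S Qb"
begin

lemma prob_space_Qb: "prob_space Qb"
  using valuation[unfolded valuation_measure_def prob_on_def] by (elim conjE)

lemma sets_Qb: "sets Qb = sets (F T)"
  using valuation[unfolded valuation_measure_def prob_on_def] by (elim conjE)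

lemma space_Qb: "space Qb = space (F T)"
  using sets_Qb by (rule sets_eq_imp_space_eq)

lemma martingale_basket: "martingale Qb F T (\<lambda>t \<omega>. basket S t \<omega> i)"
  using valuation[unfolded valuation_measure_def, THEN conjunct2] by (rule spec)

lemma integrable_basket: "t \<in> {0..T} \<Longrightarrow> integrable Qb (\<lambda>\<omega>. basket S t \<omega> i)"
  using martingale_basket[of i, unfolded martingale_def, THEN conjunct1] by blast

lemma set_integral_basket_eq:
  "0 \<le> s \<Longrightarrow> s \<le> t \<Longrightarrow> t \<le> T \<Longrightarrow> A \<in> sets (F s) \<Longrightarrow>
    (\<integral>\<omega>. basket S t \<omega> i * indicator A \<omega> \<partial>Qb) = (\<integral>\<omega>. basket S s \<omega> i * indicator A \<omega> \<partial>Qb)"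
proof -
  assume "0 \<le> s" "s \<le> t" "t \<le> T" "A \<in> sets (F s)"
  then have "(\<integral>\<omega>. indicator A \<omega> * basket S t \<omega> i \<partial>Qb) = (\<integral>\<omega>. indicator A \<omega> * basket S s \<omega> i \<partial>Qb)"
    using martingale_basket[of i, unfolded martingale_def, THEN conjunct2, rule_format] by blast
  then show ?thesis
    by (simp only: mult.commute)
qed

lemma subalgebra_Qb_F: "t \<in> {0..T} \<Longrightarrow> subalgebra Qb (F t)"
  using subalgebra_F[of t] unfolding subalgebra_def by (simp add: space_Qb sets_Qb)

lemma measurable_basket_Qb: "t \<in> {0..T} \<Longrightarrow> (\<lambda>\<omega>. basket S t \<omega> i) \<in> borel_measurable Qb"
  using measurable_from_subalg[OF subalgebra_Qb_F measurable_basket] .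

lemma nn_integral_basket_T:
  assumes t: "t \<in> {0..T}" and g: "g \<in> borel_measurable (F t)"
  shows "(\<integral>\<^sup>+\<omega>. ennreal (basket S T \<omega> i) * g \<omega> \<partial>Qb) = (\<integral>\<^sup>+\<omega>. ennreal (basket S t \<omega> i) * g \<omega> \<partial>Qb)"
proof (rule nn_integral_mult_eq_on_subalgebra[OF subalgebra_Qb_F[OF t] _ _ _ _ _ g])
  show "integrable Qb (\<lambda>\<omega>. basket S T \<omega> i)" "integrable Qb (\<lambda>\<omega>. basket S t \<omega> i)"
    using t T_pos by (simp_all add: integrable_basket)
  show "A \<in> sets (F t) \<Longrightarrow>
    (\<integral>\<omega>. basket S T \<omega> i * indicator A \<omega> \<partial>Qb) = (\<integral>\<omega>. basket S t \<omega> i * indicator A \<omega> \<partial>Qb)" for A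
    using t by (intro set_integral_basket_eq) auto
qed (rule basket_nonneg)+

definition numeraire_measure where
  "numeraire_measure i = density Qb (\<lambda>\<omega>. ennreal (basket S T \<omega> i / basket0 F S i))"

lemma sets_numeraire_measure: "sets (numeraire_measure i) = sets (F T)"
  unfolding numeraire_measure_def by (simp add: sets_Qb)

lemma nn_integral_numeraire_measure:
  assumes t: "t \<in> {0..T}" and g: "g \<in> borel_measurable (F t)"
  shows "(\<integral>\<^sup>+\<omega>. g \<omega> \<partial>numeraire_measure i)
    = ennreal (1 / basket0 F S i) * (\<integral>\<^sup>+\<omega>. ennreal (basket S t \<omega> i) * g \<omega> \<partial>Qb)"
proof -
  have T: "T \<in> {0..T}" using T_pos by simp
  have g_Qb: "g \<in> borel_measurable Qb"
    using measurable_from_subalg[OF subalgebra_Qb_F[OF t] g] .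
  have "(\<integral>\<^sup>+\<omega>. g \<omega> \<partial>numeraire_measure i)
      = (\<integral>\<^sup>+\<omega>. ennreal (1 / basket0 F S i) * (ennreal (basket S T \<omega> i) * g \<omega>) \<partial>Qb)"
    unfolding numeraire_measure_def using g_Qb measurable_basket_Qb[OF T]
    by (simp add: nn_integral_density ennreal_basket_divide_basket0 mult.assoc)
  also have "\<dots> = ennreal (1 / basket0 F S i) * (\<integral>\<^sup>+\<omega>. ennreal (basket S T \<omega> i) * g \<omega> \<partial>Qb)"
    using g_Qb measurable_basket_Qb[OF T] by (simp add: nn_integral_cmult)
  finally show ?thesis
    by (simp add: nn_integral_basket_T[OF t g])
qed

lemma emeasure_numeraire_measure:
  assumes t: "t \<in> {0..T}" and A: "A \<in> sets (F t)"
  shows "emeasure (numeraire_measure i) A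
    = ennreal (1 / basket0 F S i) * (\<integral>\<^sup>+\<omega>. ennreal (basket S t \<omega> i) * indicator A \<omega> \<partial>Qb)"
proof -
  have "A \<in> sets (numeraire_measure i)"
    using sets_F_subset[OF t A] by (simp add: sets_numeraire_measure)
  then have "emeasure (numeraire_measure i) A = (\<integral>\<^sup>+\<omega>. indicator A \<omega> \<partial>numeraire_measure i)"
    by simp
  also have "\<dots> = ennreal (1 / basket0 F S i) * (\<integral>\<^sup>+\<omega>. ennreal (basket S t \<omega> i) * indicator A \<omega> \<partial>Qb)"
    using A by (intro nn_integral_numeraire_measure[OF t]) simp
  finally show ?thesis .
qed

lemma prob_space_numeraire_measure: "prob_space (numeraire_measure i)"
proof (rule prob_spaceI)
  have 0: "0 \<in> {0..T}" using T_pos by simp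
  have "emeasure (numeraire_measure i) (space (numeraire_measure i)) = (\<integral>\<^sup>+\<omega>. 1 \<partial>numeraire_measure i)"
    by simp
  also have "\<dots> = ennreal (1 / basket0 F S i) * (\<integral>\<^sup>+\<omega>. ennreal (basket S 0 \<omega> i) \<partial>Qb)"
    using nn_integral_numeraire_measure[OF 0, of "\<lambda>_. 1"] by simp
  also have "\<dots> = ennreal (1 / basket0 F S i) * (\<integral>\<^sup>+\<omega>. ennreal (basket0 F S i) \<partial>Qb)"
    by (intro arg_cong2[where f = "(*)"] refl nn_integral_cong) (simp add: basket_0 space_Qb)
  also have "\<dots> = 1"
    using prob_space.emeasure_space_1[OF prob_space_Qb] basket0_mult_inverse[of i] by (simp add: mult.commute)
  finally show "emeasure (numeraire_measure i) (space (numeraire_measure i)) = 1" .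
qed

lemma numeraire_consistent_numeraire_measure: "numeraire_consistent F T S numeraire_measure"
  unfolding numeraire_consistent_def prob_on_def
proof (intro conjI allI ballI prob_space_numeraire_measure sets_numeraire_measure)
  fix i j t A assume t: "t \<in> {0..T}" and A [measurable]: "A \<in> sets (F t)"
  define B where "B = A \<inter> {\<omega> \<in> space (F T). 0 < S t \<omega> j i}"
  have "{\<omega> \<in> space (F t). 0 < S t \<omega> j i} \<in> sets (F t)"
    using t by measurable
  then have B: "B \<in> sets (F t)"
    unfolding B_def using A space_F[OF t] by auto
  have "(\<integral>\<^sup>+\<omega>. S t \<omega> i j * indicator A \<omega> \<partial>numeraire_measure i)
      = ennreal (1 / basket0 F S i) * (\<integral>\<^sup>+\<omega>. ennreal (basket S t \<omega> i) * (S t \<omega> i j * indicator A \<omega>) \<partial>Qb)"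
    using t by (intro nn_integral_numeraire_measure[OF t]) measurable
  also have "(\<integral>\<^sup>+\<omega>. ennreal (basket S t \<omega> i) * (S t \<omega> i j * indicator A \<omega>) \<partial>Qb)
      = (\<integral>\<^sup>+\<omega>. ennreal (basket S t \<omega> j) * indicator B \<omega> \<partial>Qb)"
  proof (rule nn_integral_cong)
    fix \<omega> assume "\<omega> \<in> space Qb"
    then have \<omega>: "\<omega> \<in> space (F T)" by (simp add: space_Qb)
    show "ennreal (basket S t \<omega> i) * (S t \<omega> i j * indicator A \<omega>) = ennreal (basket S t \<omega> j) * indicator B \<omega>"
      using S_mult_basket[OF t \<omega>, of i j] \<omega> unfolding B_def
      by (simp add: ac_simps split: split_indicator)
  qed
  also have "ennreal (1 / basket0 F S i) = init_val F S i j * ennreal (1 / basket0 F S j)"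
    by (rule inverse_basket0_eq_init_val_mult)
  finally show "(\<integral>\<^sup>+\<omega>. S t \<omega> i j * indicator A \<omega> \<partial>numeraire_measure i)
      = init_val F S i j * emeasure (numeraire_measure j) (A \<inter> {\<omega> \<in> space (F T). 0 < S t \<omega> j i})"
    using emeasure_numeraire_measure[OF t B, of j] unfolding B_def by (simp add: mult.assoc)
qed

lemma emeasure_Qb_eq_sum_numeraire_measure:
  assumes A: "A \<in> sets (F T)"
  shows "emeasure Qb A = (\<Sum>i\<in>UNIV. ennreal (basket0 F S i) * emeasure (numeraire_measure i) A)"
proof -
  have T: "T \<in> {0..T}" using T_pos by simp
  have "(\<Sum>i\<in>UNIV. ennreal (basket0 F S i) * emeasure (numeraire_measure i) A)
      = (\<Sum>i\<in>UNIV. \<integral>\<^sup>+\<omega>. ennreal (basket S T \<omega> i) * indicator A \<omega> \<partial>Qb)"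
    using basket0_mult_inverse
    by (simp add: emeasure_numeraire_measure[OF T A] mult.assoc[symmetric])
  also have "\<dots> = (\<integral>\<^sup>+\<omega>. (\<Sum>i\<in>UNIV. ennreal (basket S T \<omega> i)) * indicator A \<omega> \<partial>Qb)"
    using measurable_basket_Qb[OF T] A sets_Qb
    by (simp add: nn_integral_sum[symmetric] sum_distrib_right)
  also have "\<dots> = (\<integral>\<^sup>+\<omega>. indicator A \<omega> \<partial>Qb)"
    by (intro nn_integral_cong) (simp add: sum_basket[OF T] space_Qb)
  also have "\<dots> = emeasure Qb A"
    using A sets_Qb by simp
  finally show ?thesis ..
qed

end

section \<open>From a numeraire-consistent family to a valuation measure\<close>

locale numeraire_family = basket_market +
  fixes Q
  assumes consistent: "numeraire_consistent F T S Q"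
begin

lemma prob_space_Q: "prob_space (Q i)"
  using consistent[unfolded numeraire_consistent_def prob_on_def, THEN conjunct1] by blast

lemma sets_Q: "sets (Q i) = sets (F T)"
  using consistent[unfolded numeraire_consistent_def prob_on_def, THEN conjunct1] by blast

lemma space_Q: "space (Q i) = space (F T)"
  using sets_Q by (rule sets_eq_imp_space_eq)

lemma measurable_Q_F: "t \<in> {0..T} \<Longrightarrow> g \<in> borel_measurable (F t) \<Longrightarrow> g \<in> borel_measurable (Q k)"
  using measurable_from_subalg[OF subalgebra_F] by (simp add: measurable_cong_sets[OF sets_Q refl])

lemma nn_integral_S_indicator:
  "t \<in> {0..T} \<Longrightarrow> A \<in> sets (F t) \<Longrightarrow> (\<integral>\<^sup>+\<omega>. S t \<omega> i j * indicator A \<omega> \<partial>Q i)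
    = init_val F S i j * emeasure (Q j) (A \<inter> {\<omega> \<in> space (F T). 0 < S t \<omega> j i})"
  using consistent[unfolded numeraire_consistent_def, THEN conjunct2] by blast

lemma AE_S_less_top:
  assumes t: "t \<in> {0..T}"
  shows "AE \<omega> in Q i. S t \<omega> i j < \<top>"
proof -
  define N where "N = {\<omega> \<in> space (F T). S t \<omega> i j = \<top>}"
  have "{\<omega> \<in> space (F t). S t \<omega> i j = \<top>} \<in> sets (F t)"
    using t by measurable
  then have N: "N \<in> sets (F t)"
    unfolding N_def using space_F[OF t] by simp
  have "\<top> * emeasure (Q i) N = (\<integral>\<^sup>+\<omega>. \<top> * indicator N \<omega> \<partial>Q i)"
    using sets_F_subset[OF t N] by (simp add: sets_Q nn_integral_cmult_indicator)
  also have "\<dots> = (\<integral>\<^sup>+\<omega>. S t \<omega> i j * indicator N \<omega> \<partial>Q i)"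
    by (intro nn_integral_cong) (simp add: N_def split: split_indicator)
  also have "\<dots> = init_val F S i j * emeasure (Q j) (N \<inter> {\<omega> \<in> space (F T). 0 < S t \<omega> j i})"
    by (rule nn_integral_S_indicator[OF t N])
  also have "\<dots> < \<top>"
    using init_val_less_top finite_measure.emeasure_finite[OF prob_space.finite_measure[OF prob_space_Q]]
    by (simp add: ennreal_mult_less_top less_top)
  finally have "N \<in> null_sets (Q i)"
    using sets_F_subset[OF t N] by (simp add: sets_Q ennreal_top_mult null_sets_def split: if_splits)
  then show ?thesis
    by (rule AE_I') (auto simp: N_def space_Q less_top[symmetric])
qed

lemma nn_integral_S_mult:
  assumes t: "t \<in> {0..T}" and g: "g \<in> borel_measurable (F t)"
  shows "(\<integral>\<^sup>+\<omega>. S t \<omega> i j * g \<omega> \<partial>Q i)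
    = init_val F S i j * (\<integral>\<^sup>+\<omega>. indicator {\<omega> \<in> space (F T). 0 < S t \<omega> j i} \<omega> * g \<omega> \<partial>Q j)"
proof -
  let ?P = "{\<omega> \<in> space (F T). 0 < S t \<omega> j i}"
  have "{\<omega> \<in> space (F t). 0 < S t \<omega> j i} \<in> sets (F t)"
    using t by measurable
  then have P: "?P \<in> sets (F t)"
    using space_F[OF t] by simp
  have P_Q: "(\<lambda>\<omega>. indicator ?P \<omega> :: ennreal) \<in> borel_measurable (Q j)"
    using sets_F_subset[OF t P] by (intro borel_measurable_indicator) (simp add: sets_Q)
  have "(\<integral>\<^sup>+\<omega>. g \<omega> \<partial>density (Q i) (\<lambda>\<omega>. S t \<omega> i j))
      = (\<integral>\<^sup>+\<omega>. g \<omega> \<partial>density (Q j) (\<lambda>\<omega>. init_val F S i j * indicator ?P \<omega>))"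
  proof (rule nn_integral_eq_if_emeasure_eq_on_subalgebra[OF _ _ _ g])
    show "subalgebra (density (Q i) (\<lambda>\<omega>. S t \<omega> i j)) (F t)"
      using subalgebra_F[OF t] unfolding subalgebra_def by (simp add: space_Q sets_Q)
    fix A assume A: "A \<in> sets (F t)"
    have A_Q: "A \<in> sets (Q k)" for k
      using sets_F_subset[OF t A] by (simp add: sets_Q)
    have "emeasure (density (Q i) (\<lambda>\<omega>. S t \<omega> i j)) A = init_val F S i j * emeasure (Q j) (A \<inter> ?P)"
      using A_Q measurable_Q_F[OF t measurable_S[OF t]] by (simp add: emeasure_density nn_integral_S_indicator[OF t A])
    also have "\<dots> = emeasure (density (Q j) (\<lambda>\<omega>. init_val F S i j * indicator ?P \<omega>)) A"
      using A_Q P_Q sets_F_subset[OF t P]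
      by (simp add: emeasure_density nn_integral_cmult_indicator[symmetric] sets_Q Int_commute
          indicator_inter_arith ac_simps)
    finally show "emeasure (density (Q i) (\<lambda>\<omega>. S t \<omega> i j)) A
      = emeasure (density (Q j) (\<lambda>\<omega>. init_val F S i j * indicator ?P \<omega>)) A" .
  qed (simp add: sets_Q)
  then show ?thesis
    using measurable_Q_F[OF t g] measurable_Q_F[OF t measurable_S[OF t]] P_Q
    by (simp add: nn_integral_density nn_integral_cmult mult.assoc)
qed

lemma nn_integral_basket_swap:
  assumes t: "t \<in> {0..T}" and A [measurable]: "A \<in> sets (F t)"
  shows "ennreal (basket0 F S j) * (\<integral>\<^sup>+\<omega>. ennreal (basket S t \<omega> i) * indicator A \<omega> \<partial>Q j)
    = ennreal (basket0 F S i) * (\<integral>\<^sup>+\<omega>. ennreal (basket S t \<omega> j) * indicator A \<omega> \<partial>Q i)"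
proof -
  have g: "(\<lambda>\<omega>. ennreal (basket S t \<omega> j) * indicator A \<omega>) \<in> borel_measurable (F t)"
    using t by measurable
  have "(\<integral>\<^sup>+\<omega>. ennreal (basket S t \<omega> i) * indicator A \<omega> \<partial>Q j)
      = (\<integral>\<^sup>+\<omega>. S t \<omega> j i * (ennreal (basket S t \<omega> j) * indicator A \<omega>) \<partial>Q j)"
  proof (rule nn_integral_cong_AE)
    show "AE \<omega> in Q j. ennreal (basket S t \<omega> i) * indicator A \<omega>
        = S t \<omega> j i * (ennreal (basket S t \<omega> j) * indicator A \<omega>)"
      using AE_S_less_top[OF t, of j i] AE_space
    proof eventually_elim
      case (elim \<omega>)
      then have \<omega>: "\<omega> \<in> space (F T)" by (simp add: space_Q)
      have "S t \<omega> i j \<noteq> 0"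
        using elim exchange_matrix_eq_0_iff[OF exchange_matrix_S[OF t \<omega>], of i j] by simp
      then show ?case
        using S_mult_basket[OF t \<omega>, of j i] by (simp add: zero_less_iff_neq_zero mult.assoc[symmetric])
    qed
  qed
  also have "\<dots> = init_val F S j i
      * (\<integral>\<^sup>+\<omega>. indicator {\<omega> \<in> space (F T). 0 < S t \<omega> i j} \<omega> * (ennreal (basket S t \<omega> j) * indicator A \<omega>) \<partial>Q i)"
    by (rule nn_integral_S_mult[OF t g])
  also have "(\<integral>\<^sup>+\<omega>. indicator {\<omega> \<in> space (F T). 0 < S t \<omega> i j} \<omega> * (ennreal (basket S t \<omega> j) * indicator A \<omega>) \<partial>Q i)
      = (\<integral>\<^sup>+\<omega>. ennreal (basket S t \<omega> j) * indicator A \<omega> \<partial>Q i)"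
    by (intro nn_integral_cong)
      (auto simp: space_Q zero_less_iff_neq_zero basket_eq_0_if_S_eq_0[OF t] split: split_indicator)
  finally show ?thesis
    using init_val_mult_basket0[of j i] by (simp add: mult.assoc[symmetric] mult.commute[of "ennreal (basket0 F S j)"])
qed

definition basket_measure where
  "basket_measure = weighted_sum_measure (F T) UNIV (\<lambda>i. ennreal (basket0 F S i)) Q"

lemma sets_basket_measure [simp, measurable_cong]: "sets basket_measure = sets (F T)"
  unfolding basket_measure_def by simp

lemma space_basket_measure [simp]: "space basket_measure = space (F T)"
  unfolding basket_measure_def by simp

lemma prob_space_basket_measure: "prob_space basket_measure"
proof (rule prob_spaceI)
  have "emeasure basket_measure (space basket_measure) = (\<Sum>i\<in>UNIV. ennreal (basket0 F S i))"
    unfolding basket_measure_def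
    by (simp add: emeasure_weighted_sum_measure sets_Q prob_space.emeasure_space_1[OF prob_space_Q, simplified space_Q])
  then show "emeasure basket_measure (space basket_measure) = 1"
    by (simp add: sum_basket0)
qed

lemma nn_integral_basket_measure_basket:
  assumes t: "t \<in> {0..T}" and A [measurable]: "A \<in> sets (F t)"
  shows "(\<integral>\<^sup>+\<omega>. ennreal (basket S t \<omega> i) * indicator A \<omega> \<partial>basket_measure)
    = ennreal (basket0 F S i) * emeasure (Q i) A"
proof -
  have A_T: "A \<in> sets (F T)" by (rule sets_F_subset[OF t A])
  have "(\<integral>\<^sup>+\<omega>. ennreal (basket S t \<omega> i) * indicator A \<omega> \<partial>basket_measure)
      = (\<Sum>j\<in>UNIV. ennreal (basket0 F S j) * (\<integral>\<^sup>+\<omega>. ennreal (basket S t \<omega> i) * indicator A \<omega> \<partial>Q j))"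
    unfolding basket_measure_def using measurable_basket_F_T[OF t] A_T
    by (intro nn_integral_weighted_sum_measure) (simp_all add: sets_Q)
  also have "\<dots> = ennreal (basket0 F S i) * (\<Sum>j\<in>UNIV. \<integral>\<^sup>+\<omega>. ennreal (basket S t \<omega> j) * indicator A \<omega> \<partial>Q i)"
    by (simp add: nn_integral_basket_swap[OF t A] sum_distrib_left)
  also have "(\<Sum>j\<in>UNIV. \<integral>\<^sup>+\<omega>. ennreal (basket S t \<omega> j) * indicator A \<omega> \<partial>Q i)
      = (\<integral>\<^sup>+\<omega>. (\<Sum>j\<in>UNIV. ennreal (basket S t \<omega> j)) * indicator A \<omega> \<partial>Q i)"
    using t A_T by (simp add: nn_integral_sum[symmetric] sum_distrib_right measurable_Q_F sets_Q)
  also have "\<dots> = (\<integral>\<^sup>+\<omega>. indicator A \<omega> \<partial>Q i)"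
    by (intro nn_integral_cong) (simp add: sum_basket[OF t] space_Q)
  also have "\<dots> = emeasure (Q i) A"
    using A_T by (simp add: sets_Q)
  finally show ?thesis .
qed

lemma integrable_basket_measure_basket:
  assumes t: "t \<in> {0..T}"
  shows "integrable basket_measure (\<lambda>\<omega>. basket S t \<omega> i)"
proof (rule finite_measure.integrable_const_bound[where B = 1])
  show "finite_measure basket_measure"
    using prob_space_basket_measure by (rule prob_space.finite_measure)
  show "AE \<omega> in basket_measure. norm (basket S t \<omega> i) \<le> 1"
    using basket_le_1[OF t] by (intro AE_I2) (simp add: basket_nonneg)
qed (use measurable_basket_F_T[OF t] in simp)

lemma integral_basket_measure_basket:
  assumes t: "t \<in> {0..T}" and A: "A \<in> sets (F t)"
  shows "(\<integral>\<omega>. basket S t \<omega> i * indicator A \<omega> \<partial>basket_measure) = basket0 F S i * measure (Q i) A"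
proof -
  have "ennreal (\<integral>\<omega>. basket S t \<omega> i * indicator A \<omega> \<partial>basket_measure) = ennreal (basket0 F S i) * emeasure (Q i) A"
    using integrable_basket_measure_basket[OF t] sets_F_subset[OF t A]
    by (simp add: nn_integral_mult_indicator_eq_integral[symmetric] basket_nonneg
        nn_integral_basket_measure_basket[OF t A])
  also have "\<dots> = ennreal (basket0 F S i * measure (Q i) A)"
    using basket0_pos[of i]
    by (simp add: ennreal_mult finite_measure.emeasure_eq_measure[OF prob_space.finite_measure[OF prob_space_Q]])
  finally show ?thesis
    using basket0_pos[of i] basket_nonneg
    by (subst (asm) ennreal_inj) (auto intro!: integral_nonneg_AE simp: basket_nonneg split: split_indicator)
qed

lemma valuation_measure_basket_measure: "valuation_measure F T S basket_measure"
  unfolding valuation_measure_def prob_on_def martingale_def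
proof (intro conjI allI impI ballI prob_space_basket_measure sets_basket_measure)
  fix i t assume t: "t \<in> {0..T}"
  show "(\<lambda>\<omega>. basket S t \<omega> i) \<in> borel_measurable (F t)"
    using t by (rule measurable_basket)
  show "integrable basket_measure (\<lambda>\<omega>. basket S t \<omega> i)"
    using t by (rule integrable_basket_measure_basket)
next
  fix i s t A assume st: "0 \<le> s" "s \<le> t" "t \<le> T" and A: "A \<in> sets (F s)"
  then have "A \<in> sets (F t)"
    using sets_F_mono by blast
  then show "(\<integral>\<omega>. indicator A \<omega> * basket S t \<omega> i \<partial>basket_measure)
      = (\<integral>\<omega>. indicator A \<omega> * basket S s \<omega> i \<partial>basket_measure)"
    using integral_basket_measure_basket[of t A i] integral_basket_measure_basket[of s A i] st A
    by (simp add: mult.commute)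
qed

lemma Q_eq_density_basket_measure:
  "Q i = density basket_measure (\<lambda>\<omega>. ennreal (basket S T \<omega> i / basket0 F S i))"
proof (rule measure_eqI)
  have T: "T \<in> {0..T}" using T_pos by simp
  fix A assume "A \<in> sets (Q i)"
  then have A: "A \<in> sets (F T)" by (simp add: sets_Q)
  have "emeasure (density basket_measure (\<lambda>\<omega>. ennreal (basket S T \<omega> i / basket0 F S i))) A
      = ennreal (1 / basket0 F S i) * (\<integral>\<^sup>+\<omega>. ennreal (basket S T \<omega> i) * indicator A \<omega> \<partial>basket_measure)"
    using measurable_basket_F_T[OF T] A
    by (simp add: emeasure_density ennreal_basket_divide_basket0 nn_integral_cmult mult.assoc)
  also have "\<dots> = ennreal (1 / basket0 F S i) * ennreal (basket0 F S i) * emeasure (Q i) A"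
    by (simp only: nn_integral_basket_measure_basket[OF T A] mult.assoc)
  also have "\<dots> = emeasure (Q i) A"
    using basket0_mult_inverse[of i] by (simp add: mult.commute)
  finally show "emeasure (Q i) A = emeasure (density basket_measure (\<lambda>\<omega>. ennreal (basket S T \<omega> i / basket0 F S i))) A" ..
qed (simp add: sets_Q)

end

theorem mainTheorem3:
  fixes F :: "real \<Rightarrow> 'a measure" and T :: real
    and S :: "real \<Rightarrow> 'a \<Rightarrow> 'i::finite \<Rightarrow> 'i \<Rightarrow> ennreal"
  assumes filt: "filtered_space F T"
    and proc: "exchange_process F T S"
  shows
   "(\<forall>Qb. valuation_measure F T S Qb \<longrightarrow>
       (let Q = (\<lambda>i. density Qb (\<lambda>\<omega>. ennreal (basket S T \<omega> i / basket0 F S i))) in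
          numeraire_consistent F T S Q
          \<and> (\<forall>A\<in>sets (F T). emeasure Qb A = (\<Sum>i\<in>UNIV. ennreal (basket0 F S i) * emeasure (Q i) A))))
    \<and> (\<forall>Q. numeraire_consistent F T S Q \<longrightarrow>
       (let Qb = measure_of (space (F T)) (sets (F T))
                   (\<lambda>A. \<Sum>i\<in>UNIV. ennreal (basket0 F S i) * emeasure (Q i) A) in
          valuation_measure F T S Qb
          \<and> (\<forall>i. Q i = density Qb (\<lambda>\<omega>. ennreal (basket S T \<omega> i / basket0 F S i)))
          \<and> (\<forall>i. \<forall>t\<in>{0..T}. \<forall>A\<in>sets (F t).
               (\<integral>\<omega>. basket S t \<omega> i * indicator A \<omega> \<partial>Qb) = basket0 F S i * measure (Q i) A)))"
proof (intro conjI allI impI)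
  fix Qb assume Qb: "valuation_measure F T S Qb"
  then have "space (F T) \<noteq> {}"
    unfolding valuation_measure_def using space_nonempty_if_prob_on by blast
  with filt proc Qb interpret basket_valuation F T S Qb
    by unfold_locales
  have "numeraire_measure = (\<lambda>i. density Qb (\<lambda>\<omega>. ennreal (basket S T \<omega> i / basket0 F S i)))"
    by (simp add: fun_eq_iff numeraire_measure_def)
  then show "let Q = (\<lambda>i. density Qb (\<lambda>\<omega>. ennreal (basket S T \<omega> i / basket0 F S i))) in
      numeraire_consistent F T S Q
      \<and> (\<forall>A\<in>sets (F T). emeasure Qb A = (\<Sum>i\<in>UNIV. ennreal (basket0 F S i) * emeasure (Q i) A))"
    using numeraire_consistent_numeraire_measure emeasure_Qb_eq_sum_numeraire_measure by simp
next
  fix Q assume Q: "numeraire_consistent F T S Q"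
  then have "space (F T) \<noteq> {}"
    unfolding numeraire_consistent_def using space_nonempty_if_prob_on by blast
  with filt proc Q interpret numeraire_family F T S Q
    by unfold_locales
  show "let Qb = measure_of (space (F T)) (sets (F T)) (\<lambda>A. \<Sum>i\<in>UNIV. ennreal (basket0 F S i) * emeasure (Q i) A) in
      valuation_measure F T S Qb
      \<and> (\<forall>i. Q i = density Qb (\<lambda>\<omega>. ennreal (basket S T \<omega> i / basket0 F S i)))
      \<and> (\<forall>i. \<forall>t\<in>{0..T}. \<forall>A\<in>sets (F t).
           (\<integral>\<omega>. basket S t \<omega> i * indicator A \<omega> \<partial>Qb) = basket0 F S i * measure (Q i) A)"
    unfolding Let_def
    using valuation_measure_basket_measure Q_eq_density_basket_measure integral_basket_measure_basket
    unfolding basket_measure_def weighted_sum_measure_def by blast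
qed

end
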